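(* For $n\ge2$ and all $P,Q\in\Gamma_n$, $D_{J\Delta}(P\|Q)\le \frac23 D_{T\Delta}(P\|Q)$.
   Context: $\Gamma_n=\{P=(p_1,\dots,p_n): p_i>0,\ \sum p_i=1\}$. $\Delta(P\|Q)=\sum_{i=1}^n\frac{(p_i-q_i)^2}{p_i+q_i}$; $J(P\|Q)=\sum_{i=1}^n(p_i-q_i)\ln\frac{p_i}{q_i}$; $T(P\|Q)=\sum_{i=1}^n\frac{p_i+q_i}{2}\ln\frac{p_i+q_i}{2\sqrt{p_iq_i}}$. $D_{J\Delta}=\frac18J-\frac14\Delta$, $D_{T\Delta}=T-\frac14\Delta$. *)

theory Defs
  imports Complex_Main
begin

definition Gamma :: "nat \<Rightarrow> (nat \<Rightarrow> real) set" where
  "Gamma n = {P. (\<forall>i<n. P i > 0) \<and> (\<Sum>i<n. P i) = 1}"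

definition Delta_div :: "nat \<Rightarrow> (nat \<Rightarrow> real) \<Rightarrow> (nat \<Rightarrow> real) \<Rightarrow> real" where
  "Delta_div n P Q = (\<Sum>i<n. (P i - Q i)^2 / (P i + Q i))"

definition J_div :: "nat \<Rightarrow> (nat \<Rightarrow> real) \<Rightarrow> (nat \<Rightarrow> real) \<Rightarrow> real" where
  "J_div n P Q = (\<Sum>i<n. (P i - Q i) * ln (P i / Q i))"

definition T_div :: "nat \<Rightarrow> (nat \<Rightarrow> real) \<Rightarrow> (nat \<Rightarrow> real) \<Rightarrow> real" where
  "T_div n P Q = (\<Sum>i<n. (P i + Q i) / 2 * ln ((P i + Q i) / (2 * sqrt (P i * Q i))))"

definition D_JDelta :: "nat \<Rightarrow> (nat \<Rightarrow> real) \<Rightarrow> (nat \<Rightarrow> real) \<Rightarrow> real" where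
  "D_JDelta n P Q = J_div n P Q / 8 - Delta_div n P Q / 4"

definition D_TDelta :: "nat \<Rightarrow> (nat \<Rightarrow> real) \<Rightarrow> (nat \<Rightarrow> real) \<Rightarrow> real" where
  "D_TDelta n P Q = T_div n P Q - Delta_div n P Q / 4"

end

theory Submission
  imports Defs "HOL-Analysis.Convex"
begin

(* All divergences involved are Csiszar f-divergences, so the inequality holds term by term:
   with x = p/q, the i-th term of 2/3 D_TDelta - D_JDelta equals q * gap_gen x / 24.
   The generator gap_gen vanishes together with its derivative at x = 1, and its second
   derivative is (x - 1)^4 / (x^2 (x + 1)^3) >= 0, so it is convex and hence nonnegative. *)

definition gap_gen :: "real \<Rightarrow> real" where
  "gap_gen x = 8 * (x + 1) * (ln (x + 1) - ln 2) - (7 * x + 1) * ln x + 2 * (x - 1)^2 / (x + 1)"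

definition gap_gen_deriv :: "real \<Rightarrow> real" where
  "gap_gen_deriv x = 8 * (ln (x + 1) - ln 2) - 7 * ln x + 1 - 1 / x + 2 * (x - 1) * (x + 3) / (x + 1)^2"

lemma has_real_derivative_gap_gen:
  assumes "x > 0"
  shows "(gap_gen has_real_derivative gap_gen_deriv x) (at x)"
proof -
  have "x + 1 > 0" using assms by simp
  show ?thesis
    unfolding gap_gen_def [abs_def]
    apply (rule DERIV_cong)
     apply (intro derivative_eq_intros refl)
    using assms \<open>x + 1 > 0\<close> apply simp_all
    unfolding gap_gen_deriv_def by (simp add: divide_simps) algebra
qed

lemma has_real_derivative_gap_gen_deriv:
  assumes "x > 0"
  shows "(gap_gen_deriv has_real_derivative (x - 1)^4 / (x^2 * (x + 1)^3)) (at x)"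
proof -
  have "x + 1 > 0" using assms by simp
  show ?thesis
    unfolding gap_gen_deriv_def [abs_def]
    apply (rule DERIV_cong)
     apply (intro derivative_eq_intros refl)
    using assms \<open>x + 1 > 0\<close> apply simp_all
    by (simp add: divide_simps) algebra
qed

lemma gap_gen_nonneg:
  assumes "x > 0"
  shows "gap_gen x \<ge> 0"
proof -
  have "gap_gen_deriv 1 * (x - 1) \<le> gap_gen x - gap_gen 1"
    by (rule f''_imp_f' [of "{0<..}"])
       (use assms has_real_derivative_gap_gen has_real_derivative_gap_gen_deriv in auto)
  then show ?thesis
    by (simp add: gap_gen_def gap_gen_deriv_def)
qed

lemma ln_arith_mean_over_geom_mean:
  fixes p q :: real
  assumes "p > 0" "q > 0"
  shows "ln ((p + q) / (2 * sqrt (p * q))) = ln (p / q + 1) - ln 2 - ln (p / q) / 2"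
proof -
  define x where "x = p / q"
  have "x > 0" using assms by (simp add: x_def)
  have "p * q = x * (q * q)"
    using assms by (simp add: x_def)
  then have "sqrt (p * q) = sqrt x * q"
    using assms by (simp add: real_sqrt_mult)
  then have "ln ((p + q) / (2 * sqrt (p * q))) = ln (((x + 1) / 2) / sqrt x)"
    using assms by (simp add: x_def field_simps)
  also have "\<dots> = ln (x + 1) - ln 2 - ln (sqrt x)"
    using \<open>x > 0\<close> by (simp add: ln_div ln_mult)
  finally show ?thesis
    using \<open>x > 0\<close> by (simp add: x_def [symmetric] ln_sqrt)
qed

lemma JDelta_term_le_TDelta_term:
  fixes p q :: real
  assumes "p > 0" "q > 0"
  shows "(p - q) * ln (p / q) / 8 - (p - q)^2 / (p + q) / 4
     \<le> 2 / 3 * ((p + q) / 2 * ln ((p + q) / (2 * sqrt (p * q))) - (p - q)^2 / (p + q) / 4)"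
proof -
  define x where "x = p / q"
  have "x > 0" using assms by (simp add: x_def)
  have p: "p = x * q" using assms by (simp add: x_def)
  have "x * q + q > 0" using \<open>x > 0\<close> assms by (simp add: add_pos_pos)
  have "2 / 3 * ((p + q) / 2 * ln ((p + q) / (2 * sqrt (p * q))) - (p - q)^2 / (p + q) / 4)
      - ((p - q) * ln (p / q) / 8 - (p - q)^2 / (p + q) / 4) = q * gap_gen x / 24"
    unfolding ln_arith_mean_over_geom_mean [OF assms] x_def [symmetric] gap_gen_def
    using \<open>x * q + q > 0\<close> assms unfolding p by (simp add: divide_simps) algebra
  moreover have "q * gap_gen x / 24 \<ge> 0"
    using gap_gen_nonneg [OF \<open>x > 0\<close>] assms by simp
  ultimately show ?thesis by linarith
qed

theorem proposition5p5:
  fixes n :: nat and P Q :: "nat \<Rightarrow> real"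
  assumes "n \<ge> 2" and "P \<in> Gamma n" and "Q \<in> Gamma n"
  shows "D_JDelta n P Q \<le> 2 / 3 * D_TDelta n P Q"
proof -
  have "D_JDelta n P Q = (\<Sum>i<n. (P i - Q i) * ln (P i / Q i) / 8 - (P i - Q i)^2 / (P i + Q i) / 4)"
    by (simp add: D_JDelta_def J_div_def Delta_div_def sum_subtractf sum_divide_distrib)
  also have "\<dots> \<le> (\<Sum>i<n. 2 / 3 * ((P i + Q i) / 2 * ln ((P i + Q i) / (2 * sqrt (P i * Q i)))
                                      - (P i - Q i)^2 / (P i + Q i) / 4))"
    using assms(2,3) by (intro sum_mono JDelta_term_le_TDelta_term) (auto simp: Gamma_def)
  also have "\<dots> = 2 / 3 * (\<Sum>i<n. (P i + Q i) / 2 * ln ((P i + Q i) / (2 * sqrt (P i * Q i)))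
                                      - (P i - Q i)^2 / (P i + Q i) / 4)"
    by (rule sum_distrib_left [symmetric])
  also have "\<dots> = 2 / 3 * D_TDelta n P Q"
    by (simp add: D_TDelta_def T_div_def Delta_div_def sum_subtractf sum_divide_distrib)
  finally show ?thesis .
qed

end
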